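(* Let $A,B$ be real symmetric $n\times n$ matrices, $f,g\in\mathbb{R}^n$, $\mu\in\mathbb{R}$, let $G(x)=x^TBx-2g^Tx$, and consider the problem (QP1QC): $\inf\, x^TAx-2f^Tx$ subject to $G(x)\le\mu$. Suppose the primal Slater condition holds (there exists $x_0$ with $G(x_0)<\mu$) and the optimal value of (QP1QC) is finite. Then the infimum of (QP1QC) is not attained if and only if $I_{\succeq}(A,B)=\{\sigma\in\mathbb{R}: A+\sigma B\succeq 0\}$ is a single-point set $\{\sigma^*\}$ with $\sigma^*\ge 0$ and the system in $y$ $$G\big((A+\sigma^*B)^+(f+\sigma^*g)+Vy\big)=\mu\ \text{ if } \sigma^*>0,\qquad G\big(A^+f+Vy\big)\le\mu\ \text{ if } \sigma^*=0,$$ has no solution $y$, where $V$ is a matrix whose columns form a basis of the null space $N(A+\sigma^*B)$.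
   Context: $M^+$ denotes the Moore–Penrose pseudoinverse of $M$; $M\succeq 0$ means positive semidefinite; $N(M)=\{v: Mv=0\}$. *)

theory Defs
  imports "HOL-Analysis.Analysis"
begin

definition symmetric_mat :: "real^'n^'n \<Rightarrow> bool" where
  "symmetric_mat M \<longleftrightarrow> transpose M = M"

definition psd :: "real^'n^'n \<Rightarrow> bool" where
  "psd M \<longleftrightarrow> (\<forall>x. x \<bullet> (M *v x) \<ge> 0)"

definition pinv :: "real^'n^'m \<Rightarrow> real^'m^'n" where
  "pinv M = (THE X. M ** X ** M = M \<and> X ** M ** X = X \<and>
                    transpose (M ** X) = M ** X \<and> transpose (X ** M) = X ** M)"

definition null_space :: "real^'n^'m \<Rightarrow> (real^'n) set" where
  "null_space M = {v. M *v v = 0}"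

definition quad_fun :: "real^'n^'n \<Rightarrow> real^'n \<Rightarrow> real^'n \<Rightarrow> real" where
  "quad_fun M h x = x \<bullet> (M *v x) - 2 * (h \<bullet> x)"

definition I_psd :: "real^'n^'n \<Rightarrow> real^'n^'n \<Rightarrow> real set" where
  "I_psd A B = {\<sigma>. psd (A + \<sigma> *\<^sub>R B)}"

end

theory Submission
  imports Defs
begin

text \<open>
  Slater's condition and a finite optimal value give, via the S-lemma, a multiplier
  \<open>\<sigma> \<ge> 0\<close> with \<open>A + \<sigma>B \<succeq> 0\<close> and strong duality. The infimum is then attained exactly
  at the feasible, complementary KKT points for \<open>\<sigma>\<close>, and these are the points
  \<open>(A + \<sigma>B)\<^sup>+(f + \<sigma>g) + v\<close> with \<open>v \<in> N(A + \<sigma>B)\<close>, since \<open>f + \<sigma>g\<close> lies in the range of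
  \<open>A + \<sigma>B\<close>. If \<open>I\<^sub>\<succeq>(A, B)\<close> contains a second point \<open>\<sigma>'\<close>, then either the constraint can be
  moved freely along a common null vector of \<open>A\<close> and \<open>B\<close>, or \<open>A\<close> has a null direction of
  negative curvature for \<open>B\<close>, or some \<open>A + \<tau>B \<succeq> 0\<close> with \<open>\<tau> \<ge> 0\<close> has null space inside
  \<open>N(A) \<inter> N(B)\<close>, on which \<open>f\<close> and \<open>g\<close> vanish; in the last case the problem lives on the range
  of \<open>A + \<tau>B\<close>, where it is coercive. In every case the infimum is attained, so
  non-attainment forces \<open>I\<^sub>\<succeq>(A, B) = {\<sigma>}\<close>.
\<close>

section \<open>Quadratic functions\<close>

lemma inner_mult_symmetric:
  fixes M :: "real^'n^'n"
  assumes "symmetric_mat M"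
  shows "x \<bullet> (M *v y) = (M *v x) \<bullet> y"
proof -
  have "x \<bullet> (M *v y) = (transpose M *v x) \<bullet> y" by (simp add: dot_lmul_matrix)
  with assms show ?thesis by (simp add: symmetric_mat_def)
qed

lemma symmetric_mat_pencil:
  assumes "symmetric_mat A" "symmetric_mat B"
  shows "symmetric_mat (A + s *\<^sub>R B)"
proof -
  have "transpose (A + s *\<^sub>R B) = transpose A + s *\<^sub>R transpose B"
    by (simp add: transpose_def vec_eq_iff)
  with assms show ?thesis by (simp add: symmetric_mat_def)
qed

lemma mult_pencil: "(A + s *\<^sub>R B) *v x = A *v x + s *\<^sub>R (B *v (x :: real^'n))"
  by (simp add: matrix_vector_mult_add_rdistrib scaleR_matrix_vector_assoc[symmetric])

lemma inner_mult_pencil: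
  "x \<bullet> ((A + s *\<^sub>R B) *v x) = x \<bullet> (A *v x) + s * (x \<bullet> (B *v (x :: real^'n)))"
  by (simp only: mult_pencil inner_add_right inner_scaleR_right)

lemma quad_fun_pencil:
  "quad_fun (A + s *\<^sub>R B) (f + s *\<^sub>R g) x = quad_fun A f x + s * quad_fun B g x"
  unfolding quad_fun_def inner_mult_pencil by (simp add: inner_add_left algebra_simps)

lemma quad_fun_add_scaleR:
  "quad_fun M h (x + t *\<^sub>R w) =
     quad_fun M h x + t * (x \<bullet> (M *v w) + w \<bullet> (M *v x) - 2 * (h \<bullet> w)) + t\<^sup>2 * (w \<bullet> (M *v w))"
  unfolding quad_fun_def
  by (simp add: matrix_vector_right_distrib matrix_vector_mult_scaleR inner_add_left inner_add_right
      power2_eq_square algebra_simps)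

lemma quad_fun_add_scaleR_symmetric:
  fixes M :: "real^'n^'n"
  assumes "symmetric_mat M"
  shows "quad_fun M h (x + t *\<^sub>R w) =
           quad_fun M h x + 2 * t * ((M *v x - h) \<bullet> w) + t\<^sup>2 * (w \<bullet> (M *v w))"
  using inner_mult_symmetric[OF assms, of x w]
  by (simp add: quad_fun_add_scaleR inner_diff_left inner_commute algebra_simps)

lemma quad_fun_add_null:
  fixes M :: "real^'n^'n"
  assumes "symmetric_mat M" "M *v n = 0" "h \<bullet> n = 0"
  shows "quad_fun M h (x + n) = quad_fun M h x"
  using quad_fun_add_scaleR_symmetric[OF assms(1), of h x 1 n]
    inner_mult_symmetric[OF assms(1), of x n] assms(2,3)
  by (simp add: inner_diff_left)

lemma continuous_on_quad_fun: "continuous_on S (quad_fun M h)"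
  unfolding quad_fun_def by (intro continuous_intros)

lemma slope_eq_0_if_bdd_below:
  fixes c K :: real
  assumes "\<And>t. K \<le> t * c"
  shows "c = 0"
proof (rule ccontr)
  assume "c \<noteq> 0"
  have "K \<le> (- (\<bar>K\<bar> + 1) / c) * c" by (rule assms)
  also have "\<dots> = - (\<bar>K\<bar> + 1)" using \<open>c \<noteq> 0\<close> by simp
  finally show False by simp
qed

lemma leading_coeff_nonneg_if_nonneg:
  fixes a b c :: real
  assumes "\<And>t. t > 0 \<Longrightarrow> 0 \<le> a + b * t + c * t\<^sup>2"
  shows "0 \<le> c"
proof (rule tendsto_lowerbound)
  have "((\<lambda>t. a * (inverse t)\<^sup>2 + b * inverse t + c) \<longlongrightarrow> a * 0\<^sup>2 + b * 0 + c) at_top"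
    by (intro tendsto_intros tendsto_inverse_0_at_top filterlim_ident)
  then show "((\<lambda>t. a * (inverse t)\<^sup>2 + b * inverse t + c) \<longlongrightarrow> c) at_top" by simp
  show "\<forall>\<^sub>F t in at_top. 0 \<le> a * (inverse t)\<^sup>2 + b * inverse t + c"
    using eventually_gt_at_top[of 0]
  proof eventually_elim
    case (elim t)
    have "a * (inverse t)\<^sup>2 + b * inverse t + c = (a + b * t + c * t\<^sup>2) / t\<^sup>2"
      using elim by (simp add: field_simps power2_eq_square)
    then show ?case using assms[OF elim] by simp
  qed
qed simp

lemma linear_coeff_nonneg_if_nonneg:
  fixes a b :: real
  assumes "\<And>t. t > 0 \<Longrightarrow> 0 \<le> t * a + t\<^sup>2 * b"
  shows "0 \<le> a"
proof (rule tendsto_lowerbound)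
  have "((\<lambda>t. a + t * b) \<longlongrightarrow> a + 0 * b) (at_right 0)"
    by (intro tendsto_intros)
  then show "((\<lambda>t. a + t * b) \<longlongrightarrow> a) (at_right 0)" by simp
  show "\<forall>\<^sub>F t in at_right 0. 0 \<le> a + t * b"
    unfolding eventually_at_right_field
  proof (intro exI[of _ 1] conjI allI impI)
    fix t :: real assume "0 < t" "t < 1"
    then have "a + t * b = (t * a + t\<^sup>2 * b) / t" by (simp add: field_simps power2_eq_square)
    with \<open>0 < t\<close> assms[of t] show "0 \<le> a + t * b" by simp
  qed simp
qed simp

lemma linear_coeff_eq_0_if_nonneg:
  fixes a b :: real
  assumes "\<And>t. 0 \<le> 2 * t * a + t\<^sup>2 * b"
  shows "a = 0"
proof -
  have "0 \<le> 2 * a"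
  proof (rule linear_coeff_nonneg_if_nonneg)
    show "0 \<le> t * (2 * a) + t\<^sup>2 * b" for t using assms[of t] by (simp add: mult.assoc)
  qed
  moreover have "0 \<le> - 2 * a"
  proof (rule linear_coeff_nonneg_if_nonneg)
    show "0 \<le> t * (- 2 * a) + t\<^sup>2 * b" for t using assms[of "- t"] by simp
  qed
  ultimately show ?thesis by simp
qed

lemma psd_form_eq_0_imp_mult_eq_0:
  fixes M :: "real^'n^'n"
  assumes "symmetric_mat M" "psd M" "x \<bullet> (M *v x) = 0"
  shows "M *v x = 0"
proof -
  have "0 \<le> 2 * t * ((M *v x) \<bullet> w) + t\<^sup>2 * (w \<bullet> (M *v w))" for t w
    using assms(2)[unfolded psd_def, rule_format, of "x + t *\<^sub>R w"] assms(3)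
      quad_fun_add_scaleR_symmetric[OF assms(1), of 0 x t w]
    by (simp add: quad_fun_def)
  then have "(M *v x) \<bullet> (M *v x) = 0" by (rule linear_coeff_eq_0_if_nonneg)
  then show ?thesis by simp
qed

lemma quad_fun_minimal_if_stationary:
  fixes M :: "real^'n^'n"
  assumes "symmetric_mat M" "psd M" "M *v x = h"
  shows "quad_fun M h x \<le> quad_fun M h y"
  using quad_fun_add_scaleR_symmetric[OF assms(1), of h x 1 "y - x"] assms(2,3)
  by (simp add: psd_def)

lemma stationary_if_quad_fun_minimal:
  fixes M :: "real^'n^'n"
  assumes "symmetric_mat M" "\<And>y. quad_fun M h x \<le> quad_fun M h y"
  shows "M *v x = h"
proof -
  let ?d = "M *v x - h"
  have "0 \<le> 2 * t * (?d \<bullet> ?d) + t\<^sup>2 * (?d \<bullet> (M *v ?d))" for t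
    using assms(2)[of "x + t *\<^sub>R ?d"] quad_fun_add_scaleR_symmetric[OF assms(1), of h x t ?d]
    by simp
  then have "?d \<bullet> ?d = 0" by (rule linear_coeff_eq_0_if_nonneg)
  then show ?thesis by simp
qed

lemma orthogonal_null_space_if_quad_fun_bdd_below:
  fixes M :: "real^'n^'n"
  assumes "\<And>x. K \<le> quad_fun M h x" and "n \<in> null_space M"
  shows "h \<bullet> n = 0"
proof -
  have "K \<le> t * (- 2 * (h \<bullet> n))" for t
    using assms(1)[of "t *\<^sub>R n"] assms(2)
    by (simp add: quad_fun_def null_space_def matrix_vector_mult_scaleR)
  then show ?thesis using slope_eq_0_if_bdd_below by fastforce
qed

lemma symmetric_range_orthogonal_null_space:
  fixes M :: "real^'n^'n"
  assumes "symmetric_mat M" "n \<in> null_space M"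
  shows "(M *v z) \<bullet> n = 0"
  using inner_mult_symmetric[OF assms(1), of z n] assms(2) by (simp add: null_space_def)

lemma symmetric_range_inter_null_space:
  fixes M :: "real^'n^'n"
  assumes "symmetric_mat M" "u \<in> range ((*v) M)" "M *v u = 0"
  shows "u = 0"
proof -
  obtain z where "u = M *v z" using assms(2) by blast
  then have "u \<bullet> u = 0"
    using symmetric_range_orthogonal_null_space[OF assms(1), of u z] assms(3)
    by (simp add: null_space_def)
  then show ?thesis by simp
qed

lemma inj_on_range_symmetric:
  fixes M :: "real^'n^'n"
  assumes "symmetric_mat M"
  shows "inj_on ((*v) M) (range ((*v) M))"
proof (rule inj_onI)
  fix u v assume "u \<in> range ((*v) M)" "v \<in> range ((*v) M)" "M *v u = M *v v"
  moreover have "subspace (range ((*v) M))"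
    by (intro linear_subspace_image subspace_UNIV matrix_vector_mul_linear)
  ultimately have "u - v \<in> range ((*v) M)" "M *v (u - v) = 0"
    by (simp_all add: subspace_diff matrix_vector_mult_diff_distrib)
  then have "u - v = 0" by (rule symmetric_range_inter_null_space[OF assms])
  then show "u = v" by simp
qed

lemma psd_coercive_on_range:
  fixes M :: "real^'n^'n"
  assumes "symmetric_mat M" "psd M"
  obtains c where "c > 0" "\<And>y. y \<in> range ((*v) M) \<Longrightarrow> c * (norm y)\<^sup>2 \<le> y \<bullet> (M *v y)"
proof -
  let ?R = "range ((*v) M)"
  have subR: "subspace ?R"
    by (intro linear_subspace_image subspace_UNIV matrix_vector_mul_linear)
  let ?S = "sphere 0 1 \<inter> ?R"
  have pos: "0 < y \<bullet> (M *v y)" if "y \<in> ?S" for y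
  proof -
    have "y \<noteq> 0" using that by auto
    then have "y \<bullet> (M *v y) \<noteq> 0"
      using that symmetric_range_inter_null_space[OF assms(1), of y]
        psd_form_eq_0_imp_mult_eq_0[OF assms, of y] by blast
    with assms(2) show ?thesis by (simp add: psd_def order_less_le)
  qed
  obtain c where "c > 0" and c: "\<And>y. y \<in> ?S \<Longrightarrow> c \<le> y \<bullet> (M *v y)"
  proof (cases "?S = {}")
    case True
    then show ?thesis by (intro that[of 1]) auto
  next
    case False
    have "compact ?S" by (intro compact_Int_closed compact_sphere closed_subspace subR)
    moreover have "continuous_on ?S (\<lambda>y. y \<bullet> (M *v y))" by (intro continuous_intros)
    ultimately obtain y0 where "y0 \<in> ?S" "\<And>y. y \<in> ?S \<Longrightarrow> y0 \<bullet> (M *v y0) \<le> y \<bullet> (M *v y)"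
      using continuous_attains_inf[of ?S] False by blast
    with pos show ?thesis by (intro that[of "y0 \<bullet> (M *v y0)"]) auto
  qed
  have "c * (norm y)\<^sup>2 \<le> y \<bullet> (M *v y)" if "y \<in> ?R" for y
  proof (cases "y = 0")
    case False
    let ?u = "(1 / norm y) *\<^sub>R y"
    have "?u \<in> ?R" using that subspace_scale[OF subR] by blast
    moreover have "norm ?u = 1" using False by simp
    ultimately have "?u \<in> ?S" by simp
    then have "c \<le> ?u \<bullet> (M *v ?u)" by (rule c)
    also have "\<dots> = (y \<bullet> (M *v y)) / (norm y)\<^sup>2"
      by (simp add: matrix_vector_mult_scaleR power2_eq_square)
    finally show ?thesis using False by (simp add: field_simps)
  qed simp
  with \<open>c > 0\<close> show ?thesis using that by blast
qed

section \<open>The pseudoinverse of a symmetric matrix\<close>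

definition penrose_conditions :: "real^'n^'m \<Rightarrow> real^'m^'n \<Rightarrow> bool" where
  "penrose_conditions M X \<longleftrightarrow> M ** X ** M = M \<and> X ** M ** X = X \<and>
     transpose (M ** X) = M ** X \<and> transpose (X ** M) = X ** M"

lemma penrose_conditions_unique:
  assumes "penrose_conditions M X" "penrose_conditions M Y"
  shows "X = Y"
proof -
  have x1: "M ** X ** M = M" and x2: "X ** M ** X = X" and x3: "transpose (M ** X) = M ** X"
    and x4: "transpose (X ** M) = X ** M" using assms(1) by (auto simp: penrose_conditions_def)
  have y1: "M ** Y ** M = M" and y2: "Y ** M ** Y = Y" and y3: "transpose (M ** Y) = M ** Y"
    and y4: "transpose (Y ** M) = Y ** M" using assms(2) by (auto simp: penrose_conditions_def)
  have "X = X ** transpose (M ** X)" using x2 x3 by (simp add: matrix_mul_assoc)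
  also have "\<dots> = X ** transpose X ** transpose (M ** Y ** M)"
    using y1 by (simp add: matrix_transpose_mul matrix_mul_assoc)
  also have "\<dots> = X ** transpose (M ** X) ** (M ** Y)"
    using y3 by (simp add: matrix_transpose_mul matrix_mul_assoc)
  also have "\<dots> = X ** M ** Y" using x2 x3 by (simp add: matrix_mul_assoc)
  finally have X: "X = X ** M ** Y" .
  have "Y = transpose (Y ** M) ** Y" using y2 y4 by simp
  also have "\<dots> = transpose (M ** X ** M) ** transpose Y ** Y"
    using x1 by (simp add: matrix_transpose_mul)
  also have "\<dots> = (X ** M) ** transpose (Y ** M) ** Y"
    using x4 by (simp add: matrix_transpose_mul matrix_mul_assoc)
  also have "\<dots> = X ** M ** (Y ** M ** Y)" using y4 by (simp add: matrix_mul_assoc)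
  also have "\<dots> = X ** M ** Y" using y2 by simp
  finally have "Y = X ** M ** Y" .
  with X show ?thesis by simp
qed

lemma pinv_eqI: "penrose_conditions M X \<Longrightarrow> pinv M = X"
  unfolding pinv_def penrose_conditions_def[symmetric]
  using penrose_conditions_unique by blast

lemma symmetric_matrix_if_inner_symmetric:
  fixes C :: "real^'n^'n"
  assumes "\<And>x y. (C *v x) \<bullet> y = x \<bullet> (C *v y)"
  shows "transpose C = C"
proof -
  have "(transpose C *v x) \<bullet> y = x \<bullet> (C *v y)" for x y
    by (simp add: dot_lmul_matrix)
  then have "(transpose C *v x - C *v x) \<bullet> y = 0" for x y
    using assms by (simp add: inner_diff_left)
  then have "transpose C *v x = C *v x" for x
    by (metis inner_eq_zero_iff right_minus_eq)
  then show ?thesis by (simp add: matrix_eq)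
qed

lemma symmetric_range_projection:
  fixes M :: "real^'n^'n"
  assumes "symmetric_mat M"
  obtains p where "linear p" "\<And>x. p x \<in> range ((*v) M)" "\<And>x. M *v p x = M *v x"
    "\<And>x y. p x \<bullet> y = x \<bullet> p y"
proof -
  let ?R = "range ((*v) M)"
  have subR: "subspace ?R"
    by (intro linear_subspace_image subspace_UNIV matrix_vector_mul_linear)
  have uniq: "u = v" if "u \<in> ?R" "v \<in> ?R" "M *v u = M *v v" for u v
    using inj_onD[OF inj_on_range_symmetric[OF assms] that(3) that(1,2)] .
  have "\<exists>y. y \<in> ?R \<and> (\<forall>w\<in>?R. orthogonal (x - y) w)" for x
  proof -
    obtain y z where "y \<in> span ?R" "\<And>w. w \<in> span ?R \<Longrightarrow> orthogonal z w" "x = y + z"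
      using orthogonal_subspace_decomp_exists[of ?R x] by blast
    with subR show ?thesis by (metis add_diff_cancel_left' span_eq_iff)
  qed
  then obtain p where pR: "\<And>x. p x \<in> ?R" and orth: "\<And>x w. w \<in> ?R \<Longrightarrow> orthogonal (x - p x) w"
    by metis
  have null: "M *v (x - p x) = 0" for x
  proof -
    have "(M *v (x - p x)) \<bullet> (M *v (x - p x)) = (x - p x) \<bullet> (M *v (M *v (x - p x)))"
      by (rule inner_mult_symmetric[OF assms, symmetric])
    also have "\<dots> = 0" using orth[of "M *v (M *v (x - p x))" x] by (simp add: orthogonal_def)
    finally show ?thesis by simp
  qed
  then have Mp: "M *v p x = M *v x" for x by (simp add: matrix_vector_mult_diff_distrib)
  have "linear p"
  proof
    show "p (x + y) = p x + p y" for x y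
      using uniq[of "p (x + y)" "p x + p y"] pR subspace_add[OF subR] Mp
      by (simp add: matrix_vector_right_distrib)
    show "p (c *\<^sub>R x) = c *\<^sub>R p x" for c x
      using uniq[of "p (c *\<^sub>R x)" "c *\<^sub>R p x"] pR subspace_scale[OF subR] Mp
      by (simp add: matrix_vector_mult_scaleR)
  qed
  moreover have "p x \<bullet> y = x \<bullet> p y" for x y
  proof -
    have "p x \<bullet> (y - p y) = 0" "(x - p x) \<bullet> p y = 0"
      using orth[OF pR, of y x] orth[OF pR, of x y] by (simp_all add: orthogonal_def inner_commute)
    then show ?thesis by (simp add: inner_diff_left inner_diff_right)
  qed
  ultimately show ?thesis using that pR Mp by blast
qed

lemma penrose_conditions_exist_symmetric:
  fixes M :: "real^'n^'n"
  assumes "symmetric_mat M"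
  shows "\<exists>X. penrose_conditions M X"
proof -
  let ?R = "range ((*v) M)"
  obtain p where lin_p: "linear p" and pR: "\<And>x. p x \<in> ?R" and Mp: "\<And>x. M *v p x = M *v x"
    and p_sym: "\<And>x y. p x \<bullet> y = x \<bullet> p y"
    using symmetric_range_projection[OF assms] by blast
  have subR: "subspace ?R"
    by (intro linear_subspace_image subspace_UNIV matrix_vector_mul_linear)
  have uniq: "u = v" if "u \<in> ?R" "v \<in> ?R" "M *v u = M *v v" for u v
    using inj_onD[OF inj_on_range_symmetric[OF assms] that(3) that(1,2)] .
  have p_fix: "p u = u" if "u \<in> ?R" for u using uniq[OF pR that Mp] .
  \<comment> \<open>\<open>s x\<close> is the unique preimage of \<open>p x\<close> under \<open>M\<close> inside the range of \<open>M\<close>\<close>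
  define s where "s x = p (SOME z. M *v z = p x)" for x
  have sR: "s x \<in> ?R" for x unfolding s_def by (rule pR)
  have Ms: "M *v s x = p x" for x
  proof -
    have "\<exists>z. M *v z = p x" using pR[of x] by (metis rangeE)
    then have "M *v (SOME z. M *v z = p x) = p x" by (rule someI_ex)
    then show ?thesis by (simp add: s_def Mp)
  qed
  have "linear s"
  proof
    show "s (x + y) = s x + s y" for x y
      using uniq[of "s (x + y)" "s x + s y"] sR subspace_add[OF subR] Ms linear_add[OF lin_p]
      by (simp add: matrix_vector_right_distrib)
    show "s (c *\<^sub>R x) = c *\<^sub>R s x" for c x
      using uniq[of "s (c *\<^sub>R x)" "c *\<^sub>R s x"] sR subspace_scale[OF subR] Ms linear_scale[OF lin_p]
      by (simp add: matrix_vector_mult_scaleR)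
  qed
  define X where "X = matrix s"
  have X: "X *v x = s x" for x
    unfolding X_def by (simp add: matrix_works \<open>linear s\<close>)
  have MX: "(M ** X) *v x = p x" for x by (simp add: matrix_vector_mul_assoc[symmetric] X Ms)
  have XM: "(X ** M) *v x = p x" for x
    using uniq[OF sR pR, of "M *v x" x] Ms p_fix[of "M *v x"]
    by (simp add: matrix_vector_mul_assoc[symmetric] X Mp)
  have "M ** X ** M = M"
    using MX p_fix by (simp add: matrix_eq matrix_vector_mul_assoc[symmetric])
  moreover have "X ** M ** X = X"
    using XM p_fix[OF sR] by (simp add: matrix_eq matrix_vector_mul_assoc[symmetric] X)
  moreover have "transpose (M ** X) = M ** X" "transpose (X ** M) = X ** M"
    by (simp_all add: MX XM p_sym symmetric_matrix_if_inner_symmetric)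
  ultimately show ?thesis unfolding penrose_conditions_def by blast
qed

lemma penrose_conditions_pinv:
  fixes M :: "real^'n^'n"
  assumes "symmetric_mat M"
  shows "penrose_conditions M (pinv M)"
proof -
  obtain X where X: "penrose_conditions M X" using penrose_conditions_exist_symmetric[OF assms] ..
  then have "pinv M = X" by (rule pinv_eqI)
  with X show ?thesis by simp
qed

lemma mult_pinv_eq_if_orthogonal_null_space:
  fixes M :: "real^'n^'n"
  assumes sym: "symmetric_mat M" and orth: "\<And>n. n \<in> null_space M \<Longrightarrow> h \<bullet> n = 0"
  shows "M *v (pinv M *v h) = h"
proof -
  let ?X = "pinv M"
  have x1: "M ** ?X ** M = M" and x3: "transpose (M ** ?X) = M ** ?X"
    using penrose_conditions_pinv[OF sym] by (auto simp: penrose_conditions_def)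
  have "M ** (M ** ?X) = transpose (M ** ?X ** M)"
    using sym x3 by (simp add: symmetric_mat_def matrix_transpose_mul)
  then have MMX: "M ** (M ** ?X) = M" using x1 sym by (simp add: symmetric_mat_def)
  let ?n = "h - M *v (?X *v h)"
  have n: "?n \<in> null_space M"
    using MMX by (simp add: null_space_def matrix_vector_mult_diff_distrib matrix_vector_mul_assoc)
  have "?n \<bullet> ?n = 0"
    using orth[OF n] symmetric_range_orthogonal_null_space[OF sym n, of "?X *v h"]
    by (simp add: inner_diff_left)
  then show ?thesis by simp
qed

lemma range_null_space_decomposition:
  fixes M :: "real^'n^'n"
  assumes "symmetric_mat M"
  obtains z n where "x = M *v z + n" "n \<in> null_space M"
proof -
  obtain p where pR: "\<And>x. p x \<in> range ((*v) M)" and Mp: "\<And>x. M *v p x = M *v x"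
    using symmetric_range_projection[OF assms] by metis
  obtain z where "p x = M *v z" using pR[of x] by blast
  with Mp[of x] show ?thesis
    using that[of z "x - M *v z"] by (simp add: null_space_def matrix_vector_mult_diff_distrib)
qed

section \<open>The S-lemma\<close>

definition quadratic_on_lines :: "('v::real_vector \<Rightarrow> real) \<Rightarrow> bool" where
  "quadratic_on_lines P \<longleftrightarrow> (\<forall>z w. \<exists>b. \<forall>t. P (z + t *\<^sub>R w) = P z + 2 * t * b + t\<^sup>2 * P w)"

lemma quadratic_root_with_sign:
  fixes a q c e :: real
  assumes "a > 0" "q > 0"
  obtains t where "a + 2 * t * c - q * t\<^sup>2 = 0" "t * e \<le> 0"
proof -
  define s where "s = sqrt (c\<^sup>2 + a * q)"
  have s2: "s\<^sup>2 = c\<^sup>2 + a * q" unfolding s_def using assms by (simp add: add_nonneg_nonneg)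
  have "\<bar>c\<bar> < s" unfolding s_def using assms by (simp add: real_less_rsqrt)
  then have roots: "(c - s) / q < 0" "0 < (c + s) / q" using assms by (simp_all add: divide_neg_pos)
  have root: "a + 2 * t * c - q * t\<^sup>2 = 0" if "t * q = c - s \<or> t * q = c + s" for t
  proof -
    have "q * (a + 2 * t * c - q * t\<^sup>2) = a * q + 2 * c * (t * q) - (t * q)\<^sup>2"
      by (simp add: power2_eq_square algebra_simps)
    also have "\<dots> = 0"
    proof -
      have "a * q + 2 * c * u - u\<^sup>2 = 0" if "u = c - s \<or> u = c + s" for u
        using that s2 by (auto simp: power2_eq_square algebra_simps)
      with that show ?thesis by blast
    qed
    finally show ?thesis using assms by simp
  qed
  show ?thesis
  proof (cases "e \<ge> 0")
    case True
    have "(c - s) / q * e \<le> 0" by (rule mult_nonpos_nonneg) (use roots(1) True in auto)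
    with root[of "(c - s) / q"] assms show ?thesis by (intro that[of "(c - s) / q"]) simp_all
  next
    case False
    have "(c + s) / q * e \<le> 0" by (rule mult_nonneg_nonpos) (use roots(2) False in auto)
    with root[of "(c + s) / q"] assms show ?thesis by (intro that[of "(c + s) / q"]) simp_all
  qed
qed

lemma S_lemma_two_points:
  assumes P: "quadratic_on_lines P" and Q: "quadratic_on_lines Q"
    and imp: "\<And>z. Q z \<le> 0 \<Longrightarrow> 0 \<le> P z"
    and "Q z > 0" "Q w < 0"
  shows "0 \<le> P z * (- Q w) + P w * Q z"
proof -
  obtain b where b: "\<And>t. P (z + t *\<^sub>R w) = P z + 2 * t * b + t\<^sup>2 * P w"
    using P unfolding quadratic_on_lines_def by blast
  obtain c where c: "\<And>t. Q (z + t *\<^sub>R w) = Q z + 2 * t * c + t\<^sup>2 * Q w"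
    using Q unfolding quadratic_on_lines_def by blast
  define q where "q = - Q w"
  define \<tau> where "\<tau> = P w / q"
  have "q > 0" using \<open>Q w < 0\<close> by (simp add: q_def)
  \<comment> \<open>\<open>P + \<tau> Q\<close> is affine on the line through \<open>z\<close> and \<open>w\<close>; evaluate it at a zero of
    \<open>Q\<close> where its slope term is \<open>\<le> 0\<close>\<close>
  obtain t where t: "Q z + 2 * t * c - q * t\<^sup>2 = 0" "t * (b + \<tau> * c) \<le> 0"
    using quadratic_root_with_sign[OF \<open>Q z > 0\<close> \<open>q > 0\<close>] by blast
  have "Q (z + t *\<^sub>R w) = 0" using c[of t] t(1) by (simp add: q_def algebra_simps)
  then have "0 \<le> P (z + t *\<^sub>R w)" by (simp add: imp)
  also have "\<dots> = P z + \<tau> * Q z + 2 * t * (b + \<tau> * c) - \<tau> * (Q z + 2 * t * c - q * t\<^sup>2)"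
    using b[of t] \<open>q > 0\<close> by (simp add: \<tau>_def algebra_simps)
  also have "\<dots> \<le> P z + \<tau> * Q z" using t by simp
  finally have "0 \<le> q * (P z + \<tau> * Q z)" using \<open>q > 0\<close> by simp
  then show ?thesis using \<open>q > 0\<close> by (simp add: \<tau>_def q_def algebra_simps)
qed

lemma homogeneous_S_lemma:
  assumes P: "quadratic_on_lines P" and Q: "quadratic_on_lines Q"
    and slater: "Q w0 < 0" and imp: "\<And>z. Q z \<le> 0 \<Longrightarrow> 0 \<le> P z"
  shows "\<exists>\<sigma>\<ge>0. \<forall>z. 0 \<le> P z + \<sigma> * Q z"
proof -
  define S where "S = insert 0 {- P z / Q z | z. Q z > 0}"
  have le: "s \<le> P w / - Q w" if "s \<in> S" "Q w < 0" for s w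
  proof -
    have "0 \<le> P w / - Q w" using imp[of w] that(2) by (intro divide_nonneg_pos) auto
    moreover have "- P z / Q z \<le> P w / - Q w" if "Q z > 0" for z
      using S_lemma_two_points[OF P Q imp \<open>Q z > 0\<close> \<open>Q w < 0\<close>] \<open>Q z > 0\<close> \<open>Q w < 0\<close>
      by (simp add: divide_simps algebra_simps)
    ultimately show ?thesis using that(1) by (auto simp: S_def)
  qed
  have "bdd_above S" using le slater by (auto simp: bdd_above_def)
  define \<sigma> where "\<sigma> = Sup S"
  have "0 \<le> \<sigma>" unfolding \<sigma>_def using \<open>bdd_above S\<close> by (auto intro: cSup_upper simp: S_def)
  moreover have "0 \<le> P z + \<sigma> * Q z" for z
  proof (cases "Q z" "0 :: real" rule: linorder_cases)
    case less
    have "\<sigma> \<le> P z / - Q z" unfolding \<sigma>_def using le less by (intro cSup_least) (auto simp: S_def)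
    with less show ?thesis by (simp add: field_simps)
  next
    case equal
    then show ?thesis using imp by simp
  next
    case greater
    then have "- P z / Q z \<le> \<sigma>"
      unfolding \<sigma>_def using \<open>bdd_above S\<close> by (intro cSup_upper) (auto simp: S_def)
    with greater show ?thesis by (simp add: field_simps)
  qed
  ultimately show ?thesis by blast
qed

definition homogenized_quad :: "real^'n^'n \<Rightarrow> real^'n \<Rightarrow> real \<Rightarrow> (real^'n) \<times> real \<Rightarrow> real" where
  "homogenized_quad M h c z = fst z \<bullet> (M *v fst z) - 2 * snd z * (h \<bullet> fst z) - c * (snd z)\<^sup>2"

lemma quadratic_on_lines_homogenized_quad:
  fixes M :: "real^'n^'n"
  shows "quadratic_on_lines (homogenized_quad M h c)"
  unfolding quadratic_on_lines_def
proof (intro allI)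
  fix z w :: "(real^'n) \<times> real"
  obtain x s y r where zw: "z = (x, s)" "w = (y, r)" by fastforce
  define b where "b = (x \<bullet> (M *v y) + y \<bullet> (M *v x)) / 2 - s * (h \<bullet> y) - r * (h \<bullet> x) - c * s * r"
  have "homogenized_quad M h c (z + t *\<^sub>R w) =
          homogenized_quad M h c z + 2 * t * b + t\<^sup>2 * homogenized_quad M h c w" for t
    unfolding homogenized_quad_def zw b_def
    by (simp add: matrix_vector_right_distrib matrix_vector_mult_scaleR inner_add_left inner_add_right
        power2_eq_square algebra_simps)
  then show "\<exists>b. \<forall>t. homogenized_quad M h c (z + t *\<^sub>R w) =
                     homogenized_quad M h c z + 2 * t * b + t\<^sup>2 * homogenized_quad M h c w"
    by blast
qed

lemma homogenized_quad_scale: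
  "homogenized_quad M h c (s *\<^sub>R x, s) = s\<^sup>2 * (quad_fun M h x - c)"
  unfolding homogenized_quad_def quad_fun_def
  by (simp add: matrix_vector_mult_scaleR power2_eq_square algebra_simps)

lemma homogenized_quad_direction: "homogenized_quad M h c (x, 0) = x \<bullet> (M *v x)"
  by (simp add: homogenized_quad_def)

lemma form_nonneg_on_recession_directions:
  fixes A B :: "real^'n^'n"
  assumes "quad_fun B g x0 \<le> \<mu>" and lower: "\<And>x. quad_fun B g x \<le> \<mu> \<Longrightarrow> \<gamma> \<le> quad_fun A f x"
    and "x \<bullet> (B *v x) \<le> 0"
  shows "0 \<le> x \<bullet> (A *v x)"
proof (rule leading_coeff_nonneg_if_nonneg)
  define \<alpha> where "\<alpha> = x0 \<bullet> (A *v x) + x \<bullet> (A *v x0) - 2 * (f \<bullet> x)"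
  define \<beta> where "\<beta> = x0 \<bullet> (B *v x) + x \<bullet> (B *v x0) - 2 * (g \<bullet> x)"
  \<comment> \<open>move from \<open>x0\<close> along \<open>\<plusminus>x\<close>, in the direction in which the constraint does not grow\<close>
  define \<epsilon> :: real where "\<epsilon> = (if \<beta> \<ge> 0 then -1 else 1)"
  fix t :: real assume "t > 0"
  have \<epsilon>: "\<epsilon> * t * \<beta> \<le> 0" "(\<epsilon> * t)\<^sup>2 = t\<^sup>2" "\<epsilon> * t * \<alpha> \<le> \<bar>\<alpha>\<bar> * t"
    using \<open>t > 0\<close> by (auto simp: \<epsilon>_def mult_le_0_iff)
  have "t\<^sup>2 * (x \<bullet> (B *v x)) \<le> 0" using assms(3) by (simp add: mult_nonneg_nonpos)
  then have "quad_fun B g (x0 + (\<epsilon> * t) *\<^sub>R x) \<le> \<mu>"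
    using assms(1) \<epsilon> quad_fun_add_scaleR[of B g x0 "\<epsilon> * t" x] by (simp add: \<beta>_def)
  then have "\<gamma> \<le> quad_fun A f (x0 + (\<epsilon> * t) *\<^sub>R x)" by (rule lower)
  also have "\<dots> = quad_fun A f x0 + \<epsilon> * t * \<alpha> + t\<^sup>2 * (x \<bullet> (A *v x))"
    using \<epsilon> quad_fun_add_scaleR[of A f x0 "\<epsilon> * t" x] by (simp add: \<alpha>_def)
  finally show "0 \<le> (quad_fun A f x0 - \<gamma>) + \<bar>\<alpha>\<bar> * t + (x \<bullet> (A *v x)) * t\<^sup>2"
    using \<epsilon>(3) by (simp add: algebra_simps)
qed

lemma S_lemma:
  fixes A B :: "real^'n^'n"
  assumes slater: "quad_fun B g x0 < \<mu>"
    and lower: "\<And>x. quad_fun B g x \<le> \<mu> \<Longrightarrow> \<gamma> \<le> quad_fun A f x"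
  shows "\<exists>\<sigma>\<ge>0. psd (A + \<sigma> *\<^sub>R B) \<and> (\<forall>x. \<gamma> \<le> quad_fun A f x + \<sigma> * (quad_fun B g x - \<mu>))"
proof -
  let ?P = "homogenized_quad A f \<gamma>" and ?Q = "homogenized_quad B g \<mu>"
  have "0 \<le> ?P z" if "?Q z \<le> 0" for z
  proof -
    obtain x s where z: "z = (x, s)" by fastforce
    show ?thesis
    proof (cases "s = 0")
      case True
      then show ?thesis
        using that form_nonneg_on_recession_directions[OF less_imp_le[OF slater] lower]
        by (simp add: z homogenized_quad_direction)
    next
      case False
      then have z': "z = (s *\<^sub>R ((1 / s) *\<^sub>R x), s)" by (simp add: z)
      have "quad_fun B g ((1 / s) *\<^sub>R x) \<le> \<mu>"
        using that False unfolding z' homogenized_quad_scale by (simp add: mult_le_0_iff)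
      then show ?thesis using lower unfolding z' homogenized_quad_scale by simp
    qed
  qed
  moreover have "?Q (x0, 1) < 0" using slater homogenized_quad_scale[of B g \<mu> 1 x0] by simp
  ultimately obtain \<sigma> where "\<sigma> \<ge> 0" and \<sigma>: "\<And>z. 0 \<le> ?P z + \<sigma> * ?Q z"
    using homogeneous_S_lemma quadratic_on_lines_homogenized_quad by metis
  have "psd (A + \<sigma> *\<^sub>R B)"
    unfolding psd_def inner_mult_pencil using \<sigma>[of "(_, 0)"]
    by (simp add: homogenized_quad_direction)
  moreover have "\<gamma> \<le> quad_fun A f x + \<sigma> * (quad_fun B g x - \<mu>)" for x
    using \<sigma>[of "(x, 1)"] homogenized_quad_scale[of _ _ _ 1 x] by simp
  ultimately show ?thesis using \<open>\<sigma> \<ge> 0\<close> by blast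
qed

section \<open>Attainment\<close>

definition qp1qc_value :: "real^'n^'n \<Rightarrow> real^'n \<Rightarrow> real^'n^'n \<Rightarrow> real^'n \<Rightarrow> real \<Rightarrow> real" where
  "qp1qc_value A f B g \<mu> = (INF x\<in>{x. quad_fun B g x \<le> \<mu>}. quad_fun A f x)"

definition qp1qc_attained :: "real^'n^'n \<Rightarrow> real^'n \<Rightarrow> real^'n^'n \<Rightarrow> real^'n \<Rightarrow> real \<Rightarrow> bool" where
  "qp1qc_attained A f B g \<mu> \<longleftrightarrow>
     (\<exists>x. quad_fun B g x \<le> \<mu> \<and> quad_fun A f x = qp1qc_value A f B g \<mu>)"

definition optimal_multiplier ::
    "real^'n^'n \<Rightarrow> real^'n \<Rightarrow> real^'n^'n \<Rightarrow> real^'n \<Rightarrow> real \<Rightarrow> real \<Rightarrow> bool" where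
  "optimal_multiplier A f B g \<mu> \<sigma> \<longleftrightarrow> 0 \<le> \<sigma> \<and> psd (A + \<sigma> *\<^sub>R B) \<and>
     (\<forall>x. qp1qc_value A f B g \<mu> \<le> quad_fun A f x + \<sigma> * (quad_fun B g x - \<mu>))"

lemma qp1qc_value_le:
  assumes "bdd_below (quad_fun A f ` {x. quad_fun B g x \<le> \<mu>})" "quad_fun B g x \<le> \<mu>"
  shows "qp1qc_value A f B g \<mu> \<le> quad_fun A f x"
  unfolding qp1qc_value_def using assms by (auto intro: cINF_lower)

lemma qp1qc_attainedI:
  assumes "quad_fun B g x \<le> \<mu>" "\<And>z. quad_fun B g z \<le> \<mu> \<Longrightarrow> quad_fun A f x \<le> quad_fun A f z"
  shows "qp1qc_attained A f B g \<mu>"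
  unfolding qp1qc_attained_def qp1qc_value_def
  using assms by (intro exI[of _ x]) (auto intro: cInf_eq_minimum[symmetric])

lemma optimal_multiplier_exists:
  assumes "quad_fun B g x0 < \<mu>" "bdd_below (quad_fun A f ` {x. quad_fun B g x \<le> \<mu>})"
  shows "\<exists>\<sigma>. optimal_multiplier A f B g \<mu> \<sigma>"
  using S_lemma[OF assms(1) qp1qc_value_le[OF assms(2)]] by (auto simp: optimal_multiplier_def)

lemma qp1qc_attained_iff_KKT:
  fixes A B :: "real^'n^'n"
  assumes "symmetric_mat A" "symmetric_mat B" and \<sigma>: "optimal_multiplier A f B g \<mu> \<sigma>"
  shows "qp1qc_attained A f B g \<mu> \<longleftrightarrow>
    (\<exists>x. (A + \<sigma> *\<^sub>R B) *v x = f + \<sigma> *\<^sub>R g \<and> quad_fun B g x \<le> \<mu> \<and> \<sigma> * (quad_fun B g x - \<mu>) = 0)"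
    (is "_ \<longleftrightarrow> (\<exists>x. ?stationary x \<and> ?feasible x \<and> ?slack x)")
proof
  let ?L = "quad_fun (A + \<sigma> *\<^sub>R B) (f + \<sigma> *\<^sub>R g)"
  have sym: "symmetric_mat (A + \<sigma> *\<^sub>R B)" by (rule symmetric_mat_pencil[OF assms(1,2)])
  have "0 \<le> \<sigma>" and psd: "psd (A + \<sigma> *\<^sub>R B)"
    and dual: "\<And>y. qp1qc_value A f B g \<mu> + \<sigma> * \<mu> \<le> ?L y"
    using \<sigma> by (auto simp: optimal_multiplier_def quad_fun_pencil algebra_simps)
  have nonpos: "\<sigma> * (quad_fun B g x - \<mu>) \<le> 0" if "?feasible x" for x
    using \<open>0 \<le> \<sigma>\<close> that by (simp add: mult_nonneg_nonpos)
  show "\<exists>x. ?stationary x \<and> ?feasible x \<and> ?slack x" if att: "qp1qc_attained A f B g \<mu>"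
  proof -
    obtain x where x: "?feasible x" "quad_fun A f x = qp1qc_value A f B g \<mu>"
      using att unfolding qp1qc_attained_def by blast
    then have "?slack x" using dual[of x] nonpos[of x] by (simp add: quad_fun_pencil algebra_simps)
    then have "?L x = qp1qc_value A f B g \<mu> + \<sigma> * \<mu>"
      using x(2) by (simp add: quad_fun_pencil right_diff_distrib)
    then have "?L x \<le> ?L y" for y using dual[of y] by simp
    with x \<open>?slack x\<close> show ?thesis using stationary_if_quad_fun_minimal[OF sym] by blast
  qed
  show "qp1qc_attained A f B g \<mu>" if KKT: "\<exists>x. ?stationary x \<and> ?feasible x \<and> ?slack x"
  proof -
    obtain x where x: "?stationary x" "?feasible x" "?slack x" using KKT by blast
    have "quad_fun A f x \<le> quad_fun A f z" if "?feasible z" for z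
    proof -
      have "quad_fun A f x = ?L x - \<sigma> * \<mu>"
        using x(3) by (simp add: quad_fun_pencil right_diff_distrib)
      also have "\<dots> \<le> ?L z - \<sigma> * \<mu>" using quad_fun_minimal_if_stationary[OF sym psd x(1)] by simp
      also have "\<dots> \<le> quad_fun A f z"
        using nonpos[OF that] by (simp add: quad_fun_pencil algebra_simps)
      finally show ?thesis .
    qed
    with x(2) show ?thesis by (rule qp1qc_attainedI)
  qed
qed

lemma optimal_multiplier_stationary_solvable:
  fixes A B :: "real^'n^'n"
  assumes "symmetric_mat A" "symmetric_mat B" "optimal_multiplier A f B g \<mu> \<sigma>"
  shows "(A + \<sigma> *\<^sub>R B) *v (pinv (A + \<sigma> *\<^sub>R B) *v (f + \<sigma> *\<^sub>R g)) = f + \<sigma> *\<^sub>R g"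
proof (rule mult_pinv_eq_if_orthogonal_null_space)
  show "symmetric_mat (A + \<sigma> *\<^sub>R B)" by (rule symmetric_mat_pencil[OF assms(1,2)])
  have "qp1qc_value A f B g \<mu> + \<sigma> * \<mu> \<le> quad_fun (A + \<sigma> *\<^sub>R B) (f + \<sigma> *\<^sub>R g) x" for x
    using assms(3) by (auto simp: optimal_multiplier_def quad_fun_pencil algebra_simps)
  then show "(f + \<sigma> *\<^sub>R g) \<bullet> n = 0" if "n \<in> null_space (A + \<sigma> *\<^sub>R B)" for n
    using that by (rule orthogonal_null_space_if_quad_fun_bdd_below)
qed

lemma mult_eq_iff_particular_plus_null_space:
  assumes "M *v x\<^sub>0 = h"
  shows "M *v x = h \<longleftrightarrow> (\<exists>v\<in>null_space M. x = x\<^sub>0 + v)"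
proof
  assume "M *v x = h"
  with assms have "x - x\<^sub>0 \<in> null_space M"
    by (simp add: null_space_def matrix_vector_mult_diff_distrib)
  then show "\<exists>v\<in>null_space M. x = x\<^sub>0 + v" by force
qed (use assms in \<open>auto simp: null_space_def matrix_vector_right_distrib\<close>)

lemma qp1qc_attained_iff_null_space:
  fixes A B :: "real^'n^'n"
  assumes "symmetric_mat A" "symmetric_mat B" "optimal_multiplier A f B g \<mu> \<sigma>"
  defines "x\<^sub>0 \<equiv> pinv (A + \<sigma> *\<^sub>R B) *v (f + \<sigma> *\<^sub>R g)"
  shows "qp1qc_attained A f B g \<mu> \<longleftrightarrow>
    (\<exists>v\<in>null_space (A + \<sigma> *\<^sub>R B).
       quad_fun B g (x\<^sub>0 + v) \<le> \<mu> \<and> \<sigma> * (quad_fun B g (x\<^sub>0 + v) - \<mu>) = 0)"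
proof -
  have "(A + \<sigma> *\<^sub>R B) *v x = f + \<sigma> *\<^sub>R g \<longleftrightarrow> (\<exists>v\<in>null_space (A + \<sigma> *\<^sub>R B). x = x\<^sub>0 + v)" for x
    using optimal_multiplier_stationary_solvable[OF assms(1-3)] unfolding x\<^sub>0_def
    by (rule mult_eq_iff_particular_plus_null_space)
  then show ?thesis unfolding qp1qc_attained_iff_KKT[OF assms(1-3)] by auto
qed

lemma qp1qc_attained_iff_system_solvable:
  fixes A B :: "real^'n^'n"
  assumes "symmetric_mat A" "symmetric_mat B" and \<sigma>: "optimal_multiplier A f B g \<mu> \<sigma>"
  shows "qp1qc_attained A f B g \<mu> \<longleftrightarrow>
    (if \<sigma> > 0 then
       \<exists>v\<in>null_space (A + \<sigma> *\<^sub>R B).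
         quad_fun B g (pinv (A + \<sigma> *\<^sub>R B) *v (f + \<sigma> *\<^sub>R g) + v) = \<mu>
     else \<exists>v\<in>null_space A. quad_fun B g (pinv A *v f + v) \<le> \<mu>)"
proof (cases "\<sigma> > 0")
  case True
  let ?x\<^sub>0 = "pinv (A + \<sigma> *\<^sub>R B) *v (f + \<sigma> *\<^sub>R g)"
  have "(\<exists>v\<in>null_space (A + \<sigma> *\<^sub>R B).
          quad_fun B g (?x\<^sub>0 + v) \<le> \<mu> \<and> \<sigma> * (quad_fun B g (?x\<^sub>0 + v) - \<mu>) = 0) \<longleftrightarrow>
        (\<exists>v\<in>null_space (A + \<sigma> *\<^sub>R B). quad_fun B g (?x\<^sub>0 + v) = \<mu>)"
    using True by (intro bex_cong refl) auto
  with True qp1qc_attained_iff_null_space[OF assms] show ?thesis by simp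
next
  case False
  with \<sigma> have "\<sigma> = 0" by (simp add: optimal_multiplier_def)
  with qp1qc_attained_iff_null_space[OF assms] show ?thesis by simp
qed

lemma le_max_if_quadratic_le:
  fixes c a K r :: real
  assumes "c > 0" "0 \<le> a" "0 \<le> r" "c * r\<^sup>2 - 2 * a * r \<le> K"
  shows "r \<le> max 1 ((2 * a + \<bar>K\<bar>) / c)"
proof (cases "r \<le> 1")
  case False
  then have "\<bar>K\<bar> * 1 \<le> \<bar>K\<bar> * r" by (intro mult_left_mono) auto
  then have "K \<le> \<bar>K\<bar> * r" by linarith
  with assms(4) have "(c * r) * r \<le> (2 * a + \<bar>K\<bar>) * r" by (simp add: power2_eq_square algebra_simps)
  with False have "c * r \<le> 2 * a + \<bar>K\<bar>" by simp
  with \<open>c > 0\<close> have "r \<le> (2 * a + \<bar>K\<bar>) / c" by (simp add: pos_le_divide_eq mult.commute)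
  then show ?thesis by simp
qed simp

lemma bounded_sublevel_on_range:
  fixes M :: "real^'n^'n"
  assumes "symmetric_mat M" "psd M"
  shows "bounded {y \<in> range ((*v) M). quad_fun M h y \<le> K}"
proof -
  obtain c where "c > 0" and c: "\<And>y. y \<in> range ((*v) M) \<Longrightarrow> c * (norm y)\<^sup>2 \<le> y \<bullet> (M *v y)"
    using psd_coercive_on_range[OF assms] by blast
  have "norm y \<le> max 1 ((2 * norm h + \<bar>K\<bar>) / c)"
    if "y \<in> range ((*v) M)" "quad_fun M h y \<le> K" for y
  proof (rule le_max_if_quadratic_le[OF \<open>c > 0\<close>])
    have "h \<bullet> y \<le> norm h * norm y" by (rule norm_cauchy_schwarz)
    with c[OF that(1)] that(2) show "c * (norm y)\<^sup>2 - 2 * norm h * norm y \<le> K"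
      by (simp add: quad_fun_def)
  qed simp_all
  then show ?thesis unfolding bounded_iff by blast
qed

lemma qp1qc_attained_if_null_space_condition:
  fixes A B :: "real^'n^'n"
  assumes symA: "symmetric_mat A" and symB: "symmetric_mat B"
    and feasible: "quad_fun B g x0 \<le> \<mu>"
    and bdd: "bdd_below (quad_fun A f ` {x. quad_fun B g x \<le> \<mu>})"
    and "0 \<le> \<tau>" and psd: "psd (A + \<tau> *\<^sub>R B)"
    and null: "\<And>n. (A + \<tau> *\<^sub>R B) *v n = 0 \<Longrightarrow> A *v n = 0 \<and> B *v n = 0 \<and> f \<bullet> n = 0 \<and> g \<bullet> n = 0"
  shows "qp1qc_attained A f B g \<mu>"
proof -
  let ?M = "A + \<tau> *\<^sub>R B" and ?F = "quad_fun A f" and ?G = "quad_fun B g"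
  let ?R = "range ((*v) ?M)"
  define \<gamma> where "\<gamma> = qp1qc_value A f B g \<mu>"
  have sym: "symmetric_mat ?M" by (rule symmetric_mat_pencil[OF symA symB])
  have proj: "\<exists>y\<in>?R. ?F y = ?F x \<and> ?G y = ?G x" for x
  proof -
    obtain z n where "x = ?M *v z + n" "n \<in> null_space ?M"
      using range_null_space_decomposition[OF sym] by blast
    with null[of n] show ?thesis
      using quad_fun_add_null[OF symA] quad_fun_add_null[OF symB] by (auto simp: null_space_def)
  qed
  \<comment> \<open>the objective only sees the range of \<open>?M\<close>, where it is coercive on the feasible set\<close>
  define T where "T = {y \<in> ?R. ?G y \<le> \<mu> \<and> ?F y \<le> \<gamma> + 1}"
  have "T \<subseteq> {y \<in> ?R. quad_fun ?M (f + \<tau> *\<^sub>R g) y \<le> \<gamma> + 1 + \<tau> * \<mu>}"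
  proof
    fix y assume "y \<in> T"
    then have "\<tau> * ?G y \<le> \<tau> * \<mu>" using \<open>0 \<le> \<tau>\<close> by (simp add: T_def mult_left_mono)
    with \<open>y \<in> T\<close> show "y \<in> {y \<in> ?R. quad_fun ?M (f + \<tau> *\<^sub>R g) y \<le> \<gamma> + 1 + \<tau> * \<mu>}"
      by (simp add: T_def quad_fun_pencil)
  qed
  then have "bounded T"
    using bounded_sublevel_on_range[OF sym psd] by (rule bounded_subset[rotated])
  moreover have "closed T"
  proof -
    have "T = ?R \<inter> {y. ?G y \<le> \<mu>} \<inter> {y. ?F y \<le> \<gamma> + 1}" by (auto simp: T_def)
    moreover have "closed ?R"
      by (intro closed_subspace linear_subspace_image subspace_UNIV matrix_vector_mul_linear)
    ultimately show ?thesis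
      by (simp only:)
        (intro closed_Int closed_Collect_le continuous_on_quad_fun continuous_on_const)
  qed
  ultimately have "compact T" by (simp add: compact_eq_bounded_closed)
  have "\<exists>x\<in>{x. ?G x \<le> \<mu>}. ?F x < \<gamma> + 1"
    using cINF_less_iff[OF _ bdd, of "\<gamma> + 1"] feasible by (auto simp: \<gamma>_def qp1qc_value_def)
  then obtain x1 where "?G x1 \<le> \<mu>" "?F x1 < \<gamma> + 1" by blast
  moreover obtain y1 where "y1 \<in> ?R" "?F y1 = ?F x1" "?G y1 = ?G x1" using proj[of x1] by blast
  ultimately have "T \<noteq> {}" unfolding T_def by fastforce
  then obtain y where "y \<in> T" and min: "\<And>z. z \<in> T \<Longrightarrow> ?F y \<le> ?F z"
    using continuous_attains_inf[OF \<open>compact T\<close> _ continuous_on_quad_fun] by blast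
  show ?thesis
  proof (rule qp1qc_attainedI)
    show "?G y \<le> \<mu>" using \<open>y \<in> T\<close> by (simp add: T_def)
    show "?F y \<le> ?F z" if "?G z \<le> \<mu>" for z
    proof (cases "?F z \<le> \<gamma> + 1")
      case True
      obtain y' where "y' \<in> ?R" "?F y' = ?F z" "?G y' = ?G z" using proj[of z] by blast
      with True that have "y' \<in> T" by (simp add: T_def)
      with min \<open>?F y' = ?F z\<close> show ?thesis by fastforce
    qed (use \<open>y \<in> T\<close> in \<open>auto simp: T_def\<close>)
  qed
qed

lemma affine_pos_between:
  fixes p q s s' t :: real
  assumes "0 \<le> p + s * q" "0 \<le> p + s' * q" "s < t" "t < s'" "q \<noteq> 0"
  shows "0 < p + t * q"
proof (cases "q > 0")
  case True
  with \<open>s < t\<close> have "s * q < t * q" by (simp add: mult_strict_right_mono)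
  with assms(1) show ?thesis by linarith
next
  case False
  with \<open>q \<noteq> 0\<close> \<open>t < s'\<close> have "s' * q < t * q" by (simp add: mult_strict_right_mono_neg)
  with assms(2) show ?thesis by linarith
qed

lemma psd_pencil_between:
  fixes A B :: "real^'n^'n"
  assumes "symmetric_mat A" "symmetric_mat B" "psd (A + s *\<^sub>R B)" "psd (A + s' *\<^sub>R B)"
    and "s < t" "t < s'"
  shows "psd (A + t *\<^sub>R B)"
    and "(A + t *\<^sub>R B) *v n = 0 \<Longrightarrow> A *v n = 0 \<and> B *v n = 0"
proof -
  have nonneg: "0 \<le> x \<bullet> (A *v x) + s * (x \<bullet> (B *v x))"
    "0 \<le> x \<bullet> (A *v x) + s' * (x \<bullet> (B *v x))" for x
    using assms(3,4) by (simp_all add: psd_def inner_mult_pencil)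
  have pos: "0 < x \<bullet> (A *v x) + t * (x \<bullet> (B *v x))" if "x \<bullet> (B *v x) \<noteq> 0" for x
    using affine_pos_between[OF nonneg assms(5,6) that] .
  show "psd (A + t *\<^sub>R B)"
    unfolding psd_def inner_mult_pencil using nonneg(1) pos
    by (metis less_imp_le add_0_right mult_zero_right)
  assume "(A + t *\<^sub>R B) *v n = 0"
  then have form_t: "n \<bullet> (A *v n) + t * (n \<bullet> (B *v n)) = 0"
    by (metis inner_mult_pencil inner_zero_right)
  with pos have "n \<bullet> (B *v n) = 0" by fastforce
  with form_t have "n \<bullet> ((A + s *\<^sub>R B) *v n) = 0" by (simp add: inner_mult_pencil)
  then have "(A + s *\<^sub>R B) *v n = 0"
    by (rule psd_form_eq_0_imp_mult_eq_0[OF symmetric_mat_pencil[OF assms(1,2)] assms(3)])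
  moreover have "(t - s) *\<^sub>R (B *v n) = (A + t *\<^sub>R B) *v n - (A + s *\<^sub>R B) *v n"
    unfolding mult_pencil scaleR_diff_left by (simp only: add_diff_cancel_left)
  ultimately have "(t - s) *\<^sub>R (B *v n) = 0" using \<open>(A + t *\<^sub>R B) *v n = 0\<close> by simp
  with \<open>s < t\<close> have "B *v n = 0" by simp
  with \<open>(A + t *\<^sub>R B) *v n = 0\<close> show "A *v n = 0 \<and> B *v n = 0" by (simp add: mult_pencil)
qed

lemma linear_term_orthogonal_common_null_space:
  fixes A B :: "real^'n^'n"
  assumes "symmetric_mat A" "symmetric_mat B" "quad_fun B g x0 \<le> \<mu>"
    and bdd: "bdd_below (quad_fun A f ` {x. quad_fun B g x \<le> \<mu>})"
    and "A *v w = 0" "B *v w = 0" "g \<bullet> w = 0"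
  shows "f \<bullet> w = 0"
proof -
  have "- 2 * (f \<bullet> w) = 0"
  proof (rule slope_eq_0_if_bdd_below)
    fix t
    have "quad_fun B g (x0 + t *\<^sub>R w) = quad_fun B g x0"
      using quad_fun_add_null[OF assms(2), of "t *\<^sub>R w" g x0] assms(6,7)
      by (simp add: matrix_vector_mult_scaleR)
    then have "qp1qc_value A f B g \<mu> \<le> quad_fun A f (x0 + t *\<^sub>R w)"
      using assms(3) by (intro qp1qc_value_le[OF bdd]) simp
    also have "\<dots> = quad_fun A f x0 + t * (- 2 * (f \<bullet> w))"
      using quad_fun_add_scaleR_symmetric[OF assms(1), of f x0 t w]
        inner_mult_symmetric[OF assms(1), of x0 w] assms(5)
      by (simp add: inner_diff_left)
    finally show "qp1qc_value A f B g \<mu> - quad_fun A f x0 \<le> t * (- 2 * (f \<bullet> w))" by simp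
  qed
  then show ?thesis by simp
qed

lemma qp1qc_attained_if_common_null_space_not_orthogonal:
  fixes A B :: "real^'n^'n"
  assumes symA: "symmetric_mat A" and symB: "symmetric_mat B"
    and \<sigma>: "optimal_multiplier A f B g \<mu> \<sigma>" and "A *v w = 0" "B *v w = 0" "g \<bullet> w \<noteq> 0"
  shows "qp1qc_attained A f B g \<mu>"
proof -
  define x\<^sub>0 where "x\<^sub>0 = pinv (A + \<sigma> *\<^sub>R B) *v (f + \<sigma> *\<^sub>R g)"
  \<comment> \<open>moving along \<open>w\<close> keeps the KKT equation and changes the constraint value linearly\<close>
  define t where "t = (quad_fun B g x\<^sub>0 - \<mu>) / (2 * (g \<bullet> w))"
  have "w \<in> null_space (A + \<sigma> *\<^sub>R B)" using assms(4,5) by (simp add: null_space_def mult_pencil)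
  then have "t *\<^sub>R w \<in> null_space (A + \<sigma> *\<^sub>R B)"
    by (simp add: null_space_def matrix_vector_mult_scaleR)
  moreover have "quad_fun B g (x\<^sub>0 + t *\<^sub>R w) = quad_fun B g x\<^sub>0 - 2 * t * (g \<bullet> w)"
    using quad_fun_add_scaleR_symmetric[OF symB, of g x\<^sub>0 t w]
      inner_mult_symmetric[OF symB, of x\<^sub>0 w] assms(5)
    by (simp add: inner_diff_left)
  then have "quad_fun B g (x\<^sub>0 + t *\<^sub>R w) = \<mu>" using assms(6) by (simp add: t_def field_simps)
  ultimately show ?thesis
    unfolding qp1qc_attained_iff_null_space[OF symA symB \<sigma>] x\<^sub>0_def by auto
qed

lemma qp1qc_attained_if_descent_in_null_space:
  fixes A B :: "real^'n^'n"
  assumes symA: "symmetric_mat A" and symB: "symmetric_mat B"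
    and opt: "optimal_multiplier A f B g \<mu> 0"
    and "A *v v = 0" "v \<bullet> (B *v v) < 0"
  shows "qp1qc_attained A f B g \<mu>"
proof -
  define x\<^sub>0 where "x\<^sub>0 = pinv A *v f"
  have "\<exists>t>0. quad_fun B g (x\<^sub>0 + t *\<^sub>R v) \<le> \<mu>"
  proof (rule ccontr)
    assume "\<not> ?thesis"
    then have "0 \<le> (quad_fun B g x\<^sub>0 - \<mu>) + (2 * ((B *v x\<^sub>0 - g) \<bullet> v)) * t + (v \<bullet> (B *v v)) * t\<^sup>2"
      if "t > 0" for t
      using that quad_fun_add_scaleR_symmetric[OF symB, of g x\<^sub>0 t v] by (force simp: algebra_simps)
    then have "0 \<le> v \<bullet> (B *v v)" by (rule leading_coeff_nonneg_if_nonneg)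
    with assms(5) show False by simp
  qed
  then obtain t where "quad_fun B g (x\<^sub>0 + t *\<^sub>R v) \<le> \<mu>" by blast
  moreover have "t *\<^sub>R v \<in> null_space A"
    using assms(4) by (simp add: null_space_def matrix_vector_mult_scaleR)
  ultimately show ?thesis
    using qp1qc_attained_iff_null_space[OF symA symB opt] by (auto simp: x\<^sub>0_def)
qed

lemma qp1qc_attained_if_second_psd_point:
  fixes A B :: "real^'n^'n"
  assumes symA: "symmetric_mat A" and symB: "symmetric_mat B"
    and slater: "quad_fun B g x0 < \<mu>" and bdd: "bdd_below (quad_fun A f ` {x. quad_fun B g x \<le> \<mu>})"
    and \<sigma>: "optimal_multiplier A f B g \<mu> \<sigma>" and psd': "psd (A + \<sigma>' *\<^sub>R B)" and "\<sigma>' \<noteq> \<sigma>"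
  shows "qp1qc_attained A f B g \<mu>"
proof (cases "\<exists>w. A *v w = 0 \<and> B *v w = 0 \<and> g \<bullet> w \<noteq> 0")
  case True
  then show ?thesis
    using qp1qc_attained_if_common_null_space_not_orthogonal[OF symA symB \<sigma>] by blast
next
  case False
  have by_null_space: "qp1qc_attained A f B g \<mu>"
    if "0 \<le> \<tau>" "psd (A + \<tau> *\<^sub>R B)"
      and "\<And>n. (A + \<tau> *\<^sub>R B) *v n = 0 \<Longrightarrow> A *v n = 0 \<and> B *v n = 0" for \<tau>
    using qp1qc_attained_if_null_space_condition[OF symA symB less_imp_le[OF slater] bdd that(1,2)]
      linear_term_orthogonal_common_null_space[OF symA symB less_imp_le[OF slater] bdd] False that(3)
    by metis
  have "0 \<le> \<sigma>" and psd: "psd (A + \<sigma> *\<^sub>R B)" using \<sigma> by (auto simp: optimal_multiplier_def)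
  show ?thesis
  proof (cases "\<sigma> = 0 \<and> \<sigma>' < 0")
    case True
    show ?thesis
    proof (cases "\<exists>v. A *v v = 0 \<and> v \<bullet> (B *v v) < 0")
      case True
      with \<sigma> \<open>\<sigma> = 0 \<and> \<sigma>' < 0\<close> show ?thesis
        using qp1qc_attained_if_descent_in_null_space[OF symA symB] by blast
    next
      case no_descent: False
      \<comment> \<open>on the null space of \<open>A\<close>, psd-ness at \<open>\<sigma>' < 0\<close> forces the form of \<open>B\<close> to be \<open>\<le> 0\<close>\<close>
      have "B *v n = 0" if "A *v n = 0" for n
      proof -
        have "0 \<le> \<sigma>' * (n \<bullet> (B *v n))"
          using psd'[unfolded psd_def inner_mult_pencil, rule_format, of n] that by simp
        moreover have "\<not> n \<bullet> (B *v n) < 0" using no_descent that by blast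
        ultimately have "n \<bullet> (B *v n) = 0" using True by (simp add: zero_le_mult_iff)
        with that have "(A + \<sigma>' *\<^sub>R B) *v n = 0"
          by (intro psd_form_eq_0_imp_mult_eq_0[OF symmetric_mat_pencil[OF symA symB] psd'])
            (simp add: inner_mult_pencil)
        with True that show ?thesis by (simp add: mult_pencil)
      qed
      with True psd show ?thesis by (intro by_null_space[of 0]) auto
    qed
  next
    case False
    define \<tau> where "\<tau> = (\<sigma> + max \<sigma>' 0) / 2"
    have "0 < \<tau>" "\<sigma> < \<tau> \<and> \<tau> < \<sigma>' \<or> \<sigma>' < \<tau> \<and> \<tau> < \<sigma>"
      using False \<open>\<sigma>' \<noteq> \<sigma>\<close> \<open>0 \<le> \<sigma>\<close> by (auto simp: \<tau>_def max_def)
    then show ?thesis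
      using psd_pencil_between[OF symA symB psd psd'] psd_pencil_between[OF symA symB psd' psd]
      by (intro by_null_space[of \<tau>]) auto
  qed
qed

theorem theorem7:
  fixes A B :: "real^'n^'n" and f g :: "real^'n" and \<mu> :: real
  assumes "symmetric_mat A" and "symmetric_mat B"
    and slater: "\<exists>x0. quad_fun B g x0 < \<mu>"
    and finite_val: "bdd_below (quad_fun A f ` {x. quad_fun B g x \<le> \<mu>})"
  shows "(\<not> (\<exists>x. quad_fun B g x \<le> \<mu> \<and>
              quad_fun A f x = (INF z\<in>{x. quad_fun B g x \<le> \<mu>}. quad_fun A f z)))
     \<longleftrightarrow>
     (\<exists>\<sigma>s. I_psd A B = {\<sigma>s} \<and> \<sigma>s \<ge> 0 \<and>
        (if \<sigma>s > 0 then
           \<not> (\<exists>v\<in>null_space (A + \<sigma>s *\<^sub>R B).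
                quad_fun B g (pinv (A + \<sigma>s *\<^sub>R B) *v (f + \<sigma>s *\<^sub>R g) + v) = \<mu>)
         else
           \<not> (\<exists>v\<in>null_space A. quad_fun B g (pinv A *v f + v) \<le> \<mu>)))"
proof -
  obtain x0 where x0: "quad_fun B g x0 < \<mu>" using slater by blast
  obtain \<sigma> where \<sigma>: "optimal_multiplier A f B g \<mu> \<sigma>"
    using optimal_multiplier_exists[OF x0 finite_val] by blast
  then have "0 \<le> \<sigma>" and "\<sigma> \<in> I_psd A B" by (auto simp: optimal_multiplier_def I_psd_def)
  have unique: "I_psd A B = {\<sigma>}" if "\<not> qp1qc_attained A f B g \<mu>"
    using qp1qc_attained_if_second_psd_point[OF assms(1,2) x0 finite_val \<sigma>] that
      \<open>\<sigma> \<in> I_psd A B\<close>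
    by (auto simp: I_psd_def)
  have "\<not> qp1qc_attained A f B g \<mu> \<longleftrightarrow>
     (if \<sigma> > 0 then
        \<not> (\<exists>v\<in>null_space (A + \<sigma> *\<^sub>R B).
             quad_fun B g (pinv (A + \<sigma> *\<^sub>R B) *v (f + \<sigma> *\<^sub>R g) + v) = \<mu>)
      else \<not> (\<exists>v\<in>null_space A. quad_fun B g (pinv A *v f + v) \<le> \<mu>))"
    by (simp add: qp1qc_attained_iff_system_solvable[OF assms(1,2) \<sigma>])
  moreover have "(\<exists>x. quad_fun B g x \<le> \<mu> \<and>
      quad_fun A f x = (INF z\<in>{x. quad_fun B g x \<le> \<mu>}. quad_fun A f z)) \<longleftrightarrow>
    qp1qc_attained A f B g \<mu>"
    by (simp add: qp1qc_attained_def qp1qc_value_def)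
  moreover have "\<sigma>s = \<sigma>" if "I_psd A B = {\<sigma>s}" for \<sigma>s using that \<open>\<sigma> \<in> I_psd A B\<close> by simp
  ultimately show ?thesis using unique \<open>0 \<le> \<sigma>\<close> by blast
qed

end
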